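(* Fix $n$. The set $\mathcal{Q}=\mathcal{Q}(n)$ is closed under sums and products but is not closed under limits. The set $\mathcal{Q}'=\mathcal{Q}'(n)$ is closed under products but is not closed under limits.
   Context: Hermitian symmetric polynomials in $n$ variables: $r(z,\overline w)=\sum c_{\alpha\beta}z^\alpha\overline w^\beta$ with $c_{\alpha\beta}=\overline{c_{\beta\alpha}}$. $\mathcal{Q}(n)$: those $r$ with $r=\|F\|^2/\|G\|^2$ for holomorphic polynomial mappings $F,G$, $G\not\equiv0$. $\mathcal{Q}'(n)$: those $r$ with $r(z,\overline z)\ge0$ for all $z$ for which there exist a Hermitian symmetric $s\ge0$, not identically $0$, and a holomorphic polynomial mapping $F$ with $rs=\|F\|^2$. A set $\mathcal{S}$ of Hermitian symmetric polynomials is closed under limits if whenever $r_\lambda$, $\lambda$ in a closed set $K\subset\mathbb{R}^k$, is a family of Hermitian symmetric polynomials whose coefficient matrices depend continuously on $\lambda$, with $r_\lambda\in\mathcal{S}$, and $\lambda\to L\in K$, then $r_L\in\mathcal{S}$; "not closed under limits" means some such family has $r_\lambda\in\mathcal{S}$ for all $\lambda\ne L$ near $L$ (approaching $L$) but $r_L\notin\mathcal{S}$. *)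

theory Defs
  imports "HOL-Analysis.Analysis"
begin

text \<open>Variables z = (z_i) indexed by a finite type 'n (so n = CARD('n)).  A Hermitian polynomial r(z, conj w)
  = sum c_{alpha beta} z^alpha conj(w)^beta is represented by its coefficient
  function c.\<close>

type_synonym 'n mindex = "'n \<Rightarrow> nat"
type_synonym 'n hcoeffs = "'n mindex \<Rightarrow> 'n mindex \<Rightarrow> complex"
type_synonym 'n pcoeffs = "'n mindex \<Rightarrow> complex"

definition zmonom :: "('n::finite \<Rightarrow> complex) \<Rightarrow> 'n mindex \<Rightarrow> complex" where
  "zmonom z \<alpha> = (\<Prod>i\<in>UNIV. z i ^ \<alpha> i)"

definition hsupp :: "'n hcoeffs \<Rightarrow> ('n mindex \<times> 'n mindex) set" where
  "hsupp c = {(\<alpha>, \<beta>). c \<alpha> \<beta> \<noteq> 0}"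

definition is_herm :: "('n::finite) hcoeffs \<Rightarrow> bool" where
  "is_herm c \<longleftrightarrow> finite (hsupp c) \<and> (\<forall>\<alpha> \<beta>. c \<alpha> \<beta> = cnj (c \<beta> \<alpha>))"

definition heval :: "('n::finite) hcoeffs \<Rightarrow> ('n \<Rightarrow> complex) \<Rightarrow> ('n \<Rightarrow> complex) \<Rightarrow> complex" where
  "heval c z w = (\<Sum>(\<alpha>, \<beta>)\<in>hsupp c. c \<alpha> \<beta> * zmonom z \<alpha> * cnj (zmonom w \<beta>))"

definition is_hpoly :: "('n::finite) pcoeffs \<Rightarrow> bool" where
  "is_hpoly f \<longleftrightarrow> finite {\<alpha>. f \<alpha> \<noteq> 0}"

definition peval :: "('n::finite) pcoeffs \<Rightarrow> ('n \<Rightarrow> complex) \<Rightarrow> complex" where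
  "peval f z = (\<Sum>\<alpha>\<in>{\<alpha>. f \<alpha> \<noteq> 0}. f \<alpha> * zmonom z \<alpha>)"

text \<open>Holomorphic polynomial mappings C^n -> C^N as lists of component polynomials.\<close>
definition is_hpmap :: "('n::finite) pcoeffs list \<Rightarrow> bool" where
  "is_hpmap F \<longleftrightarrow> (\<forall>f\<in>set F. is_hpoly f)"

definition hpmap_nonzero :: "('n::finite) pcoeffs list \<Rightarrow> bool" where
  "hpmap_nonzero G \<longleftrightarrow> (\<exists>f\<in>set G. \<exists>\<alpha>. f \<alpha> \<noteq> 0)"

text \<open>||F||^2 polarized: sum_j F_j(z) conj(F_j(w))\<close>
definition normsq :: "('n::finite) pcoeffs list \<Rightarrow> ('n \<Rightarrow> complex) \<Rightarrow> ('n \<Rightarrow> complex) \<Rightarrow> complex" where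
  "normsq F z w = (\<Sum>f\<leftarrow>F. peval f z * cnj (peval f w))"

definition hsum :: "('n::finite) hcoeffs \<Rightarrow> 'n hcoeffs \<Rightarrow> 'n hcoeffs" where
  "hsum c d = (\<lambda>\<alpha> \<beta>. c \<alpha> \<beta> + d \<alpha> \<beta>)"

definition hprod :: "('n::finite) hcoeffs \<Rightarrow> 'n hcoeffs \<Rightarrow> 'n hcoeffs" where
  "hprod c d = (\<lambda>\<gamma> \<delta>. \<Sum>(\<alpha>, \<beta>)\<in>hsupp c. \<Sum>(\<alpha>', \<beta>')\<in>hsupp d.
      if (\<lambda>i. \<alpha> i + \<alpha>' i) = \<gamma> \<and> (\<lambda>i. \<beta> i + \<beta>' i) = \<delta> then c \<alpha> \<beta> * d \<alpha>' \<beta>' else 0)"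

text \<open>Q(n): r = ||F||^2/||G||^2 as rational functions, i.e. r ||G||^2 = ||F||^2
  as polynomials in (z, conj w), with G not identically zero.\<close>
definition inQ :: "('n::finite) hcoeffs \<Rightarrow> bool" where
  "inQ r \<longleftrightarrow> is_herm r \<and> (\<exists>F G. is_hpmap F \<and> is_hpmap G \<and> hpmap_nonzero G \<and>
      (\<forall>z w. heval r z w * normsq G z w = normsq F z w))"

definition inQ' :: "('n::finite) hcoeffs \<Rightarrow> bool" where
  "inQ' r \<longleftrightarrow> is_herm r \<and> (\<forall>z. 0 \<le> Re (heval r z z)) \<and>
     (\<exists>s F. is_herm s \<and> (\<forall>z. 0 \<le> Re (heval s z z)) \<and> (\<exists>\<alpha> \<beta>. s \<alpha> \<beta> \<noteq> 0) \<and>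
        is_hpmap F \<and> (\<forall>z w. heval r z w * heval s z w = normsq F z w))"

text \<open>Not closed under limits: there are k, a closed set K in R^k (points of R^k are
  represented as sequences nat => real vanishing from index k on, with the product
  topology, which on this subspace is the Euclidean one), a family of Hermitian
  polynomials r_lambda whose coefficient matrices (of a fixed finite size D) depend
  continuously on lambda in K, and a limit point L of K, such that r_lambda is in S for
  all lambda \<noteq> L near L in K, but r_L is not in S.\<close>
definition not_closed_under_limits :: "(('n::finite) hcoeffs \<Rightarrow> bool) \<Rightarrow> bool" where
  "not_closed_under_limits S \<longleftrightarrow>
    (\<exists>(k::nat) (K::(nat \<Rightarrow> real) set) (r::(nat \<Rightarrow> real) \<Rightarrow> 'n hcoeffs) L D.
       closed K \<and> K \<subseteq> {x. \<forall>i\<ge>k. x i = 0} \<and> finite D \<and>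
       (\<forall>t\<in>K. is_herm (r t) \<and> hsupp (r t) \<subseteq> D) \<and>
       (\<forall>\<alpha> \<beta>. continuous_on K (\<lambda>t. r t \<alpha> \<beta>)) \<and>
       L \<in> K \<and> L islimpt K \<and>
       eventually (\<lambda>t. S (r t)) (at L within K) \<and> \<not> S (r L))"

definition closed_under_sums :: "(('n::finite) hcoeffs \<Rightarrow> bool) \<Rightarrow> bool" where
  "closed_under_sums S \<longleftrightarrow> (\<forall>c d. S c \<longrightarrow> S d \<longrightarrow> S (hsum c d))"

definition closed_under_products :: "(('n::finite) hcoeffs \<Rightarrow> bool) \<Rightarrow> bool" where
  "closed_under_products S \<longleftrightarrow> (\<forall>c d. S c \<longrightarrow> S d \<longrightarrow> S (hprod c d))"

end

theory Submission
  imports Defs "HOL-Computational_Algebra.Polynomial"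
begin

text \<open>
  If \<open>r = \<parallel>F\<parallel>\<^sup>2/\<parallel>G\<parallel>\<^sup>2\<close> and \<open>r' = \<parallel>H\<parallel>\<^sup>2/\<parallel>J\<parallel>\<^sup>2\<close>, then
  \<open>r + r' = \<parallel>F \<otimes> J \<oplus> H \<otimes> G\<parallel>\<^sup>2/\<parallel>G \<otimes> J\<parallel>\<^sup>2\<close> and \<open>r r' = \<parallel>F \<otimes> H\<parallel>\<^sup>2/\<parallel>G \<otimes> J\<parallel>\<^sup>2\<close>;
  products in \<open>Q'\<close> work the same way with \<open>s s'\<close> as multiplier. The only point needing
  care is that \<open>G \<otimes> J\<close> and \<open>s s'\<close> are not identically zero: by Kronecker substitution
  \<open>z_i = t^e_i\<close> two nonzero polynomials have a common point where neither vanishes.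

  For the limits take \<open>r_c = 1 - 2c x + x\<^sup>2\<close> with \<open>x = |z_a|\<^sup>2\<close>. If \<open>c = cos \<phi>\<close>
  with \<open>0 < \<phi> < \<pi>\<close> and \<open>U_k\<close> are the Chebyshev polynomials of the second kind, then
  \<open>r_c \<cdot> (\<Sum>k<n. U_k(c) x^k) = 1 - U_n(c) x^n + U_(n-1)(c) x^(n+1)\<close>; for the least \<open>n\<close>
  with \<open>(n + 1) \<phi> \<ge> \<pi>\<close> both polynomials in \<open>x\<close> here have nonnegative coefficients,
  so they are squared norms and \<open>r_c \<in> Q \<inter> Q'\<close>. The limit \<open>r_1 = (1 - x)\<^sup>2\<close>
  vanishes on the unit torus, so in any representation \<open>F\<close> vanishes there and hence
  identically; then \<open>G\<close> vanishes wherever \<open>|z_a| \<noteq> 1\<close>, respectively \<open>r_1 s = 0\<close>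
  forces \<open>s = 0\<close>.
\<close>

section \<open>Arithmetic of Hermitian polynomials\<close>

lemma zmonom_add: "zmonom z (\<lambda>i. \<alpha> i + \<beta> i) = zmonom z \<alpha> * zmonom z \<beta>"
  by (simp add: zmonom_def power_add prod.distrib)

lemma heval_eq_sum_superset:
  assumes "finite A" "hsupp c \<subseteq> A"
  shows "heval c z w = (\<Sum>p\<in>A. c (fst p) (snd p) * (zmonom z (fst p) * cnj (zmonom w (snd p))))"
  unfolding heval_def split_def mult.assoc
  by (rule sum.mono_neutral_left[OF assms]) (auto simp: hsupp_def)

lemma peval_eq_sum_superset:
  assumes "finite A" "{\<alpha>. f \<alpha> \<noteq> 0} \<subseteq> A"
  shows "peval f z = (\<Sum>\<alpha>\<in>A. f \<alpha> * zmonom z \<alpha>)"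
  unfolding peval_def by (rule sum.mono_neutral_left[OF assms]) auto

lemma is_herm_finite: "is_herm c \<Longrightarrow> finite (hsupp c)"
  unfolding is_herm_def by blast

lemma is_herm_cnj: "is_herm c \<Longrightarrow> cnj (c \<alpha> \<beta>) = c \<beta> \<alpha>"
  unfolding is_herm_def by (metis complex_cnj_cnj)

lemma peval_nonzero_imp_coeff_nonzero: "peval f z \<noteq> 0 \<Longrightarrow> \<exists>\<alpha>. f \<alpha> \<noteq> 0"
  unfolding peval_def by (metis (mono_tags, lifting) Collect_empty_eq sum.empty)

lemma heval_nonzero_imp_coeff_nonzero: "heval c z w \<noteq> 0 \<Longrightarrow> \<exists>\<alpha> \<beta>. c \<alpha> \<beta> \<noteq> 0"
  unfolding heval_def hsupp_def by (metis (mono_tags, lifting) Collect_empty_eq case_prodE sum.empty)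

lemma convolution_support:
  "{u. (\<Sum>p\<in>S. \<Sum>q\<in>T. if \<sigma> p q = u then h p q else 0) \<noteq> (0::'a::comm_monoid_add)}
     \<subseteq> (\<lambda>(p, q). \<sigma> p q) ` (S \<times> T)"
proof
  fix u assume "u \<in> {u. (\<Sum>p\<in>S. \<Sum>q\<in>T. if \<sigma> p q = u then h p q else 0) \<noteq> 0}"
  then have "(\<Sum>p\<in>S. \<Sum>q\<in>T. if \<sigma> p q = u then h p q else 0) \<noteq> 0" by simp
  then obtain p where p: "p \<in> S" and sp: "(\<Sum>q\<in>T. if \<sigma> p q = u then h p q else 0) \<noteq> 0"
    by (rule sum.not_neutral_contains_not_neutral)
  from sp obtain q where q: "q \<in> T" and "(if \<sigma> p q = u then h p q else 0) \<noteq> 0"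
    by (rule sum.not_neutral_contains_not_neutral)
  then have "\<sigma> p q = u" by (simp split: if_splits)
  with p q show "u \<in> (\<lambda>(p, q). \<sigma> p q) ` (S \<times> T)" by force
qed

lemma sum_convolution:
  assumes "finite U" "\<And>p q. p \<in> S \<Longrightarrow> q \<in> T \<Longrightarrow> \<sigma> p q \<in> U"
  shows "(\<Sum>u\<in>U. (\<Sum>p\<in>S. \<Sum>q\<in>T. if \<sigma> p q = u then h p q else 0) * m u)
       = (\<Sum>p\<in>S. \<Sum>q\<in>T. h p q * (m (\<sigma> p q) :: 'a::comm_semiring_1))"
proof -
  have "(\<Sum>u\<in>U. (\<Sum>p\<in>S. \<Sum>q\<in>T. if \<sigma> p q = u then h p q else 0) * m u)
      = (\<Sum>u\<in>U. \<Sum>p\<in>S. \<Sum>q\<in>T. if \<sigma> p q = u then h p q * m u else 0)"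
    by (auto simp: sum_distrib_right intro!: sum.cong)
  also have "\<dots> = (\<Sum>p\<in>S. \<Sum>q\<in>T. \<Sum>u\<in>U. if \<sigma> p q = u then h p q * m u else 0)"
    by (subst sum.swap, rule sum.cong[OF refl], subst sum.swap, rule refl)
  also have "\<dots> = (\<Sum>p\<in>S. \<Sum>q\<in>T. h p q * m (\<sigma> p q))"
    using assms by (simp cong: sum.cong)
  finally show ?thesis .
qed

lemma hsupp_hsum: "hsupp (hsum c d) \<subseteq> hsupp c \<union> hsupp d"
  by (auto simp: hsupp_def hsum_def)

lemma is_herm_hsum:
  assumes "is_herm c" "is_herm d"
  shows "is_herm (hsum c d)"
proof -
  have "finite (hsupp (hsum c d))"
    using finite_subset[OF hsupp_hsum] is_herm_finite assms by blast
  moreover have "hsum c d \<alpha> \<beta> = cnj (hsum c d \<beta> \<alpha>)" for \<alpha> \<beta>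
    by (simp add: hsum_def is_herm_cnj assms)
  ultimately show ?thesis unfolding is_herm_def by blast
qed

lemma heval_hsum:
  assumes "finite (hsupp c)" "finite (hsupp d)"
  shows "heval (hsum c d) z w = heval c z w + heval d z w"
proof -
  have fin: "finite (hsupp c \<union> hsupp d)" using assms by simp
  show ?thesis
    using heval_eq_sum_superset[OF fin hsupp_hsum, of z w]
      heval_eq_sum_superset[OF fin, of c] heval_eq_sum_superset[OF fin, of d]
    by (simp add: hsum_def distrib_right sum.distrib)
qed

definition add_mindex_pairs :: "'n mindex \<times> 'n mindex \<Rightarrow> 'n mindex \<times> 'n mindex \<Rightarrow> 'n mindex \<times> 'n mindex" where
  "add_mindex_pairs p q = ((\<lambda>i. fst p i + fst q i), (\<lambda>i. snd p i + snd q i))"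

lemma hprod_eq_convolution:
  "hprod c d \<gamma> \<delta> = (\<Sum>p\<in>hsupp c. \<Sum>q\<in>hsupp d.
     if add_mindex_pairs p q = (\<gamma>, \<delta>) then c (fst p) (snd p) * d (fst q) (snd q) else 0)"
  unfolding hprod_def add_mindex_pairs_def split_def prod.inject ..

lemma hsupp_hprod: "hsupp (hprod c d) \<subseteq> (\<lambda>(p, q). add_mindex_pairs p q) ` (hsupp c \<times> hsupp d)"
  using convolution_support[where h = "\<lambda>p q. c (fst p) (snd p) * d (fst q) (snd q)" and \<sigma> = add_mindex_pairs]
  by (auto simp: hsupp_def hprod_eq_convolution)

lemma heval_hprod:
  assumes "finite (hsupp c)" "finite (hsupp d)"
  shows "heval (hprod c d) z w = heval c z w * heval d z w"
proof -
  let ?U = "(\<lambda>(p, q). add_mindex_pairs p q) ` (hsupp c \<times> hsupp d)"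
  define m where "m u = zmonom z (fst u) * cnj (zmonom w (snd u))" for u :: "'a mindex \<times> 'a mindex"
  have "heval (hprod c d) z w = (\<Sum>u\<in>?U. hprod c d (fst u) (snd u) * m u)"
    unfolding m_def using assms by (intro heval_eq_sum_superset hsupp_hprod) auto
  also have "\<dots> = (\<Sum>p\<in>hsupp c. \<Sum>q\<in>hsupp d. c (fst p) (snd p) * d (fst q) (snd q) * m (add_mindex_pairs p q))"
    unfolding hprod_eq_convolution prod.collapse using assms by (intro sum_convolution) auto
  also have "\<dots> = (\<Sum>p\<in>hsupp c. \<Sum>q\<in>hsupp d.
      (c (fst p) (snd p) * zmonom z (fst p) * cnj (zmonom w (snd p))) *
      (d (fst q) (snd q) * zmonom z (fst q) * cnj (zmonom w (snd q))))"
    by (intro sum.cong refl) (simp add: m_def add_mindex_pairs_def zmonom_add mult_ac)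
  also have "\<dots> = heval c z w * heval d z w"
    unfolding heval_def split_def sum_product ..
  finally show ?thesis .
qed

lemma add_mindex_pairs_swap: "add_mindex_pairs (prod.swap p) (prod.swap q) = prod.swap (add_mindex_pairs p q)"
  by (simp add: add_mindex_pairs_def)

lemma sum_hsupp_swap:
  assumes "is_herm c"
  shows "(\<Sum>p\<in>hsupp c. f (prod.swap p)) = (\<Sum>p\<in>hsupp c. f p)"
proof -
  have "prod.swap p \<in> hsupp c" if "p \<in> hsupp c" for p
    using that is_herm_cnj[OF assms, of "fst p" "snd p", symmetric] by (auto simp: hsupp_def split_def)
  then show ?thesis
    by (intro sum.reindex_bij_witness[of _ prod.swap prod.swap]) auto
qed

lemma is_herm_hprod:
  assumes c: "is_herm c" and d: "is_herm d"
  shows "is_herm (hprod c d)"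
proof -
  have "hprod c d \<gamma> \<delta> = cnj (hprod c d \<delta> \<gamma>)" for \<gamma> \<delta>
  proof -
    define g where "g p q = (if add_mindex_pairs p q = (\<gamma>, \<delta>) then c (fst p) (snd p) * d (fst q) (snd q) else 0)"
      for p q
    have "cnj (hprod c d \<delta> \<gamma>) = (\<Sum>p\<in>hsupp c. \<Sum>q\<in>hsupp d. g (prod.swap p) (prod.swap q))"
      unfolding hprod_eq_convolution cnj_sum g_def add_mindex_pairs_swap
      by (intro sum.cong refl) (auto simp: prod_eq_iff is_herm_cnj[OF c] is_herm_cnj[OF d])
    also have "\<dots> = (\<Sum>p\<in>hsupp c. \<Sum>q\<in>hsupp d. g (prod.swap p) q)"
      by (intro sum.cong refl sum_hsupp_swap[OF d])
    also have "\<dots> = (\<Sum>p\<in>hsupp c. \<Sum>q\<in>hsupp d. g p q)"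
      by (rule sum_hsupp_swap[OF c, of "\<lambda>p. \<Sum>q\<in>hsupp d. g p q"])
    finally show ?thesis unfolding hprod_eq_convolution g_def by simp
  qed
  moreover have "finite (hsupp (hprod c d))"
    using finite_subset[OF hsupp_hprod] is_herm_finite[OF c] is_herm_finite[OF d] by blast
  ultimately show ?thesis unfolding is_herm_def by blast
qed

lemma heval_diag_real:
  assumes "is_herm c"
  shows "heval c z z = of_real (Re (heval c z z))"
proof -
  define f where "f p = c (fst p) (snd p) * zmonom z (fst p) * cnj (zmonom z (snd p))" for p
  have "cnj (heval c z z) = (\<Sum>p\<in>hsupp c. f (prod.swap p))"
    unfolding heval_def split_def f_def by (simp add: is_herm_cnj[OF assms] mult_ac)
  also have "\<dots> = heval c z z"
    by (simp only: sum_hsupp_swap[OF assms]) (simp add: heval_def split_def f_def)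
  finally show ?thesis by (metis Reals_cnj_iff complex_is_Real_iff of_real_Re)
qed

section \<open>Holomorphic polynomial maps\<close>

definition pmul :: "('n::finite) pcoeffs \<Rightarrow> 'n pcoeffs \<Rightarrow> 'n pcoeffs" where
  "pmul f g = (\<lambda>\<gamma>. \<Sum>\<alpha>\<in>{\<alpha>. f \<alpha> \<noteq> 0}. \<Sum>\<beta>\<in>{\<beta>. g \<beta> \<noteq> 0}.
     if (\<lambda>i. \<alpha> i + \<beta> i) = \<gamma> then f \<alpha> * g \<beta> else 0)"

lemma pmul_support:
  "{\<gamma>. pmul f g \<gamma> \<noteq> 0} \<subseteq> (\<lambda>(\<alpha>, \<beta>). \<lambda>i. \<alpha> i + \<beta> i) ` ({\<alpha>. f \<alpha> \<noteq> 0} \<times> {\<beta>. g \<beta> \<noteq> 0})"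
  unfolding pmul_def by (rule convolution_support)

lemma is_hpoly_pmul: "is_hpoly f \<Longrightarrow> is_hpoly g \<Longrightarrow> is_hpoly (pmul f g)"
  unfolding is_hpoly_def by (rule finite_subset[OF pmul_support]) simp

lemma peval_pmul:
  assumes "is_hpoly f" "is_hpoly g"
  shows "peval (pmul f g) z = peval f z * peval g z"
proof -
  let ?S = "{\<alpha>. f \<alpha> \<noteq> 0}" and ?T = "{\<beta>. g \<beta> \<noteq> 0}"
  let ?U = "(\<lambda>(\<alpha>, \<beta>). \<lambda>i. \<alpha> i + \<beta> i) ` (?S \<times> ?T)"
  have fin: "finite ?U" using assms by (simp add: is_hpoly_def)
  have "peval (pmul f g) z = (\<Sum>\<gamma>\<in>?U. pmul f g \<gamma> * zmonom z \<gamma>)"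
    by (rule peval_eq_sum_superset[OF fin pmul_support])
  also have "\<dots> = (\<Sum>\<alpha>\<in>?S. \<Sum>\<beta>\<in>?T. f \<alpha> * g \<beta> * zmonom z (\<lambda>i. \<alpha> i + \<beta> i))"
    unfolding pmul_def using fin by (intro sum_convolution) auto
  also have "\<dots> = (\<Sum>\<alpha>\<in>?S. \<Sum>\<beta>\<in>?T. (f \<alpha> * zmonom z \<alpha>) * (g \<beta> * zmonom z \<beta>))"
    by (intro sum.cong refl) (simp add: zmonom_add mult_ac)
  also have "\<dots> = peval f z * peval g z"
    unfolding peval_def sum_product ..
  finally show ?thesis .
qed

definition hpmap_tensor :: "('n::finite) pcoeffs list \<Rightarrow> 'n pcoeffs list \<Rightarrow> 'n pcoeffs list" where
  "hpmap_tensor F H = concat (map (\<lambda>f. map (pmul f) H) F)"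

lemma is_hpmap_append: "is_hpmap F \<Longrightarrow> is_hpmap H \<Longrightarrow> is_hpmap (F @ H)"
  by (auto simp: is_hpmap_def)

lemma is_hpmap_tensor: "is_hpmap F \<Longrightarrow> is_hpmap H \<Longrightarrow> is_hpmap (hpmap_tensor F H)"
  by (auto simp: is_hpmap_def hpmap_tensor_def intro: is_hpoly_pmul)

lemma normsq_append: "normsq (F @ H) z w = normsq F z w + normsq H z w"
  by (simp add: normsq_def)

lemma normsq_map_pmul:
  assumes "is_hpoly f" "is_hpmap H"
  shows "normsq (map (pmul f) H) z w = peval f z * cnj (peval f w) * normsq H z w"
  using assms(2)
  by (induction H) (auto simp: normsq_def is_hpmap_def peval_pmul[OF assms(1)] algebra_simps)

lemma normsq_tensor:
  assumes "is_hpmap F" "is_hpmap H"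
  shows "normsq (hpmap_tensor F H) z w = normsq F z w * normsq H z w"
  using assms(1)
proof (induction F)
  case Nil
  then show ?case by (simp add: normsq_def hpmap_tensor_def)
next
  case (Cons f F)
  then have "is_hpoly f" "is_hpmap F" by (auto simp: is_hpmap_def)
  with Cons.IH show ?case
    by (simp add: hpmap_tensor_def normsq_append normsq_map_pmul assms(2))
      (simp add: normsq_def algebra_simps)
qed

lemma normsq_diag: "normsq F z z = of_real (\<Sum>f\<leftarrow>F. (cmod (peval f z))\<^sup>2)"
  unfolding normsq_def
  by (induction F) (simp_all add: complex_norm_square[symmetric] del: of_real_power)

lemma normsq_diag_eq_0_iff: "normsq F z z = 0 \<longleftrightarrow> (\<forall>f\<in>set F. peval f z = 0)"
  unfolding normsq_diag of_real_eq_0_iff by (subst sum_list_nonneg_eq_0_iff) auto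

lemma normsq_diag_Re_nonneg: "0 \<le> Re (normsq F z z)"
  unfolding normsq_diag Re_complex_of_real by (rule sum_list_nonneg) auto

lemma normsq_eq_0_if_coeffs_0: "\<forall>f\<in>set F. \<forall>\<alpha>. f \<alpha> = 0 \<Longrightarrow> normsq F z w = 0"
  unfolding normsq_def peval_def by (induction F) simp_all

section \<open>Kronecker substitution\<close>

lemma zmonom_power_curve: "zmonom (\<lambda>i. t ^ e i) \<alpha> = t ^ (\<Sum>i\<in>UNIV. \<alpha> i * e i)"
  unfolding zmonom_def power_sum by (simp add: power_mult[symmetric] mult.commute)

lemma base_digits_inj:
  fixes a b :: "nat \<Rightarrow> nat"
  assumes "\<forall>k<N. a k < B" "\<forall>k<N. b k < B" "(\<Sum>k<N. a k * B ^ k) = (\<Sum>k<N. b k * B ^ k)"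
  shows "\<forall>k<N. a k = b k"
  using assms
proof (induction N arbitrary: a b)
  case 0
  then show ?case by simp
next
  case (Suc N)
  have expand: "(\<Sum>k<Suc N. c k * B ^ k) = c 0 + B * (\<Sum>k<N. c (Suc k) * B ^ k)" for c
    unfolding sum.lessThan_Suc_shift by (simp add: sum_distrib_left algebra_simps)
  define X where "X = (\<Sum>k<N. a (Suc k) * B ^ k)"
  define Y where "Y = (\<Sum>k<N. b (Suc k) * B ^ k)"
  from Suc.prems(1,2) have a0: "a 0 < B" and b0: "b 0 < B"
    and a_tail: "\<forall>k<N. a (Suc k) < B" and b_tail: "\<forall>k<N. b (Suc k) < B"
    by (simp_all add: All_less_Suc2)
  have eq: "a 0 + B * X = b 0 + B * Y"
    using Suc.prems(3) unfolding expand X_def Y_def .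
  have "(a 0 + B * X) mod B = a 0" "(b 0 + B * Y) mod B = b 0"
    using a0 b0 by simp_all
  with eq have a0_b0: "a 0 = b 0" by metis
  with eq a0 have "X = Y" by simp
  then have "\<forall>k<N. a (Suc k) = b (Suc k)"
    using Suc.IH[OF a_tail b_tail] unfolding X_def Y_def by blast
  with a0_b0 show ?case by (simp add: All_less_Suc2)
qed

lemma exists_kronecker_exponents:
  fixes A :: "('m::finite \<Rightarrow> nat) set"
  assumes "finite A"
  shows "\<exists>e. (\<forall>i. 0 < e i) \<and> inj_on (\<lambda>\<alpha>. \<Sum>i\<in>UNIV. \<alpha> i * e i) A"
proof -
  txt \<open>With \<open>e\<^sub>i = B\<^bsup>idx i\<^esup>\<close> and \<open>B\<close> above every entry, the weight of a multi-index
    is a base-\<open>B\<close> expansion whose digits are its entries.\<close>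
  define B where "B = Suc (\<Sum>\<alpha>\<in>A. \<Sum>i\<in>UNIV. \<alpha> i)"
  have bound: "\<alpha> i < B" if "\<alpha> \<in> A" for \<alpha> i
  proof -
    have "\<alpha> i \<le> (\<Sum>i\<in>UNIV. \<alpha> i)" by (rule member_le_sum) auto
    also have "\<dots> \<le> (\<Sum>\<alpha>\<in>A. \<Sum>i\<in>UNIV. \<alpha> i)" by (rule member_le_sum) (use that assms in auto)
    finally show ?thesis unfolding B_def by simp
  qed
  obtain idx where idx: "bij_betw idx (UNIV :: 'm set) {..<CARD('m)}"
    using ex_bij_betw_finite_nat[of "UNIV :: 'm set"] by (auto simp: atLeast0LessThan)
  define g where "g = inv_into UNIV idx"
  have g_idx: "g (idx i) = i" for i
    unfolding g_def using idx by (simp add: bij_betw_def)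
  have digits: "(\<Sum>i\<in>UNIV. \<alpha> i * B ^ idx i) = (\<Sum>k<CARD('m). \<alpha> (g k) * B ^ k)" for \<alpha> :: "'m \<Rightarrow> nat"
    using sum.reindex_bij_betw[OF idx, of "\<lambda>k. \<alpha> (g k) * B ^ k"] by (simp add: g_idx)
  have "0 < B" unfolding B_def by simp
  moreover have "inj_on (\<lambda>\<alpha>. \<Sum>i\<in>UNIV. \<alpha> i * B ^ idx i) A"
  proof (rule inj_onI)
    fix \<alpha> \<beta> assume "\<alpha> \<in> A" "\<beta> \<in> A"
      and "(\<Sum>i\<in>UNIV. \<alpha> i * B ^ idx i) = (\<Sum>i\<in>UNIV. \<beta> i * B ^ idx i)"
    then have "\<forall>k<CARD('m). \<alpha> (g k) = \<beta> (g k)"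
      using bound by (intro base_digits_inj[where B = B]) (simp_all add: digits)
    moreover have "idx i < CARD('m)" for i using idx by (auto simp: bij_betw_def)
    ultimately have "\<alpha> (g (idx i)) = \<beta> (g (idx i))" for i by blast
    then show "\<alpha> = \<beta>" by (simp add: g_idx fun_eq_iff)
  qed
  ultimately show ?thesis by (intro exI[of _ "\<lambda>i. B ^ idx i"]) simp
qed

lemma finite_zeros_on_monomial_curve:
  fixes f :: "'m::finite pcoeffs"
  assumes "is_hpoly f" "f \<alpha> \<noteq> 0" "inj_on (\<lambda>\<alpha>. \<Sum>i\<in>UNIV. \<alpha> i * e i) {\<alpha>. f \<alpha> \<noteq> 0}"
  shows "finite {t. peval f (\<lambda>i. t ^ e i) = 0}"
proof -
  let ?deg = "\<lambda>\<alpha>. \<Sum>i\<in>UNIV. \<alpha> i * e i"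
  define P where "P = (\<Sum>\<beta>\<in>{\<beta>. f \<beta> \<noteq> 0}. monom (f \<beta>) (?deg \<beta>))"
  have "coeff P (?deg \<alpha>) = (\<Sum>\<beta>\<in>{\<beta>. f \<beta> \<noteq> 0}. if \<beta> = \<alpha> then f \<beta> else 0)"
    unfolding P_def coeff_sum coeff_monom
    using assms(2,3) by (intro sum.cong refl) (auto dest: inj_onD)
  also have "\<dots> = f \<alpha>" using assms(1,2) by (simp add: is_hpoly_def)
  finally have "P \<noteq> 0" using assms(2) by auto
  then have "finite {t. poly P t = 0}" by (rule poly_roots_finite)
  moreover have "poly P t = peval f (\<lambda>i. t ^ e i)" for t
    unfolding P_def poly_sum peval_def zmonom_power_curve by (simp add: poly_monom)
  ultimately show ?thesis by simp
qed

lemma hpoly_ex_common_nonzero: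
  fixes f g :: "'m::finite pcoeffs"
  assumes "is_hpoly f" "is_hpoly g" "f \<alpha> \<noteq> 0" "g \<beta> \<noteq> 0"
  shows "\<exists>z. peval f z \<noteq> 0 \<and> peval g z \<noteq> 0"
proof -
  have "finite ({\<alpha>. f \<alpha> \<noteq> 0} \<union> {\<alpha>. g \<alpha> \<noteq> 0})"
    using assms(1,2) by (simp add: is_hpoly_def)
  then obtain e where e: "inj_on (\<lambda>\<alpha>. \<Sum>i\<in>UNIV. \<alpha> i * e i) ({\<alpha>. f \<alpha> \<noteq> 0} \<union> {\<alpha>. g \<alpha> \<noteq> 0})"
    using exists_kronecker_exponents by blast
  have "finite {t. peval f (\<lambda>i. t ^ e i) = 0}"
    by (rule finite_zeros_on_monomial_curve[OF assms(1,3) inj_on_subset[OF e]]) blast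
  moreover have "finite {t. peval g (\<lambda>i. t ^ e i) = 0}"
    by (rule finite_zeros_on_monomial_curve[OF assms(2,4) inj_on_subset[OF e]]) blast
  ultimately have "finite ({t. peval f (\<lambda>i. t ^ e i) = 0} \<union> {t. peval g (\<lambda>i. t ^ e i) = 0})"
    by blast
  then obtain t where "t \<notin> {t. peval f (\<lambda>i. t ^ e i) = 0} \<union> {t. peval g (\<lambda>i. t ^ e i) = 0}"
    using ex_new_if_finite[OF infinite_UNIV_char_0] by blast
  then show ?thesis by auto
qed

lemma infinite_circle: "0 < r \<Longrightarrow> infinite (sphere (0::complex) r)"
proof
  assume r: "0 < r" and fin: "finite (sphere (0::complex) r)"
  have in_sphere: "complex_of_real r \<in> sphere 0 r" "- complex_of_real r \<in> sphere 0 r"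
    using r by auto
  have "connected (sphere (0::complex) r)" by (rule connected_sphere) simp
  with fin in_sphere obtain x where "sphere (0::complex) r = {x}"
    using connected_finite_iff_sing by blast
  with in_sphere have "complex_of_real r = - complex_of_real r" by auto
  with r show False by simp
qed

lemma hpoly_eq_0_if_vanishes_on_polyradii:
  fixes f :: "'m::finite pcoeffs"
  assumes "is_hpoly f" "0 < \<rho>" "\<And>k. 0 < k \<Longrightarrow> \<rho> ^ k \<in> R"
    and "\<And>z. (\<forall>i. cmod (z i) \<in> R) \<Longrightarrow> peval f z = 0"
  shows "f \<alpha> = 0"
proof (rule ccontr)
  assume nz: "f \<alpha> \<noteq> 0"
  obtain e where e: "\<forall>i. 0 < e i" "inj_on (\<lambda>\<alpha>. \<Sum>i\<in>UNIV. \<alpha> i * e i) {\<alpha>. f \<alpha> \<noteq> 0}"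
    using exists_kronecker_exponents assms(1) unfolding is_hpoly_def by blast
  have "sphere 0 \<rho> \<subseteq> {t. peval f (\<lambda>i. t ^ e i) = 0}"
    using assms(3,4) e(1) by (auto simp: norm_power)
  with finite_zeros_on_monomial_curve[OF assms(1) nz e(2)] infinite_circle[OF assms(2)]
  show False using finite_subset by blast
qed

lemma hpmap_coeffs_zero_if_normsq_vanishes_on_polyradii:
  assumes "is_hpmap F" "0 < \<rho>" "\<And>k. 0 < k \<Longrightarrow> \<rho> ^ k \<in> R"
    and "\<And>z. \<forall>i. cmod (z i) \<in> R \<Longrightarrow> normsq F z z = 0"
  shows "\<forall>f\<in>set F. \<forall>\<alpha>. f \<alpha> = 0"
proof (intro ballI allI)
  fix f \<alpha> assume f: "f \<in> set F"
  show "f \<alpha> = 0"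
  proof (rule hpoly_eq_0_if_vanishes_on_polyradii[OF _ assms(2,3)])
    show "is_hpoly f" using assms(1) f by (simp add: is_hpmap_def)
    show "peval f z = 0" if "\<forall>i. cmod (z i) \<in> R" for z
      using assms(4)[OF that] f normsq_diag_eq_0_iff by blast
  qed
qed

section \<open>Closure under sums and products\<close>

text \<open>\<open>r(z, conj w)\<close> as a holomorphic polynomial in the \<open>2n\<close> independent variables
  \<open>(z, conj w)\<close>.\<close>

definition herm_as_hpoly :: "('n::finite) hcoeffs \<Rightarrow> ('n + 'n) pcoeffs" where
  "herm_as_hpoly c = (\<lambda>\<gamma>. c (\<gamma> \<circ> Inl) (\<gamma> \<circ> Inr))"

definition joint_point :: "('n::finite \<Rightarrow> complex) \<Rightarrow> ('n \<Rightarrow> complex) \<Rightarrow> ('n + 'n \<Rightarrow> complex)" where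
  "joint_point z w = case_sum z (\<lambda>i. cnj (w i))"

lemma zmonom_joint_point:
  "zmonom (joint_point z w) \<gamma> = zmonom z (\<gamma> \<circ> Inl) * cnj (zmonom w (\<gamma> \<circ> Inr))"
proof -
  have "zmonom (joint_point z w) \<gamma> = (\<Prod>x\<in>UNIV <+> UNIV. joint_point z w x ^ \<gamma> x)"
    unfolding zmonom_def by simp
  also have "\<dots> = zmonom z (\<gamma> \<circ> Inl) * cnj (zmonom w (\<gamma> \<circ> Inr))"
    by (subst prod.Plus) (simp_all add: zmonom_def joint_point_def)
  finally show ?thesis .
qed

lemma herm_as_hpoly_support:
  "{\<gamma>. herm_as_hpoly c \<gamma> \<noteq> 0} = (\<lambda>(\<alpha>, \<beta>). case_sum \<alpha> \<beta>) ` hsupp c"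
proof (intro equalityI subsetI)
  fix \<gamma> assume "\<gamma> \<in> {\<gamma>. herm_as_hpoly c \<gamma> \<noteq> 0}"
  then have "(\<gamma> \<circ> Inl, \<gamma> \<circ> Inr) \<in> hsupp c" by (simp add: herm_as_hpoly_def hsupp_def)
  moreover have "\<gamma> = case_sum (\<gamma> \<circ> Inl) (\<gamma> \<circ> Inr)" by (simp add: fun_eq_iff split: sum.split)
  ultimately show "\<gamma> \<in> (\<lambda>(\<alpha>, \<beta>). case_sum \<alpha> \<beta>) ` hsupp c" by force
qed (auto simp: herm_as_hpoly_def hsupp_def o_def)

lemma is_hpoly_herm_as_hpoly: "finite (hsupp c) \<Longrightarrow> is_hpoly (herm_as_hpoly c)"
  unfolding is_hpoly_def herm_as_hpoly_support by simp

lemma peval_herm_as_hpoly: "peval (herm_as_hpoly c) (joint_point z w) = heval c z w"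
proof -
  have "inj_on (\<lambda>(\<alpha>, \<beta>). case_sum \<alpha> \<beta>) (hsupp c)"
  proof (rule inj_onI, clarify)
    fix \<alpha> \<beta> \<alpha>' \<beta>' :: "'a mindex" assume "case_sum \<alpha> \<beta> = case_sum \<alpha>' \<beta>'"
    then have "case_sum \<alpha> \<beta> \<circ> Inl = case_sum \<alpha>' \<beta>' \<circ> Inl" "case_sum \<alpha> \<beta> \<circ> Inr = case_sum \<alpha>' \<beta>' \<circ> Inr"
      by simp_all
    then show "\<alpha> = \<alpha>' \<and> \<beta> = \<beta>'" by (simp add: fun_eq_iff)
  qed
  then show ?thesis
    unfolding peval_def herm_as_hpoly_support heval_def
    by (simp add: sum.reindex split_def herm_as_hpoly_def zmonom_joint_point o_def mult.assoc)
qed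

lemma heval_ex_common_nonzero:
  assumes "finite (hsupp c)" "finite (hsupp d)" "c \<alpha> \<beta> \<noteq> 0" "d \<alpha>' \<beta>' \<noteq> 0"
  shows "\<exists>z w. heval c z w \<noteq> 0 \<and> heval d z w \<noteq> 0"
proof -
  have "herm_as_hpoly c (case_sum \<alpha> \<beta>) \<noteq> 0" "herm_as_hpoly d (case_sum \<alpha>' \<beta>') \<noteq> 0"
    using assms(3,4) by (simp_all add: herm_as_hpoly_def o_def)
  then obtain u where u: "peval (herm_as_hpoly c) u \<noteq> 0" "peval (herm_as_hpoly d) u \<noteq> 0"
    using hpoly_ex_common_nonzero is_hpoly_herm_as_hpoly assms(1,2) by blast
  have "u = joint_point (u \<circ> Inl) (\<lambda>i. cnj (u (Inr i)))"
    by (simp add: joint_point_def fun_eq_iff split: sum.split)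
  with u show ?thesis by (metis peval_herm_as_hpoly)
qed

lemma hpmap_nonzero_tensor:
  assumes "is_hpmap G" "is_hpmap J" "hpmap_nonzero G" "hpmap_nonzero J"
  shows "hpmap_nonzero (hpmap_tensor G J)"
proof -
  obtain g \<alpha> where g: "g \<in> set G" "g \<alpha> \<noteq> 0" using assms(3) by (auto simp: hpmap_nonzero_def)
  obtain j \<beta> where j: "j \<in> set J" "j \<beta> \<noteq> 0" using assms(4) by (auto simp: hpmap_nonzero_def)
  have "is_hpoly g" "is_hpoly j" using assms(1,2) g j by (auto simp: is_hpmap_def)
  moreover obtain z where "peval g z \<noteq> 0" "peval j z \<noteq> 0"
    using hpoly_ex_common_nonzero \<open>is_hpoly g\<close> \<open>is_hpoly j\<close> g(2) j(2) by blast
  ultimately have "peval (pmul g j) z \<noteq> 0" by (simp add: peval_pmul)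
  then obtain \<gamma> where "pmul g j \<gamma> \<noteq> 0" using peval_nonzero_imp_coeff_nonzero by blast
  moreover have "pmul g j \<in> set (hpmap_tensor G J)" using g j by (auto simp: hpmap_tensor_def)
  ultimately show ?thesis by (auto simp: hpmap_nonzero_def)
qed

lemma inQ_hsum:
  assumes "inQ c" "inQ d"
  shows "inQ (hsum c d)"
proof -
  obtain F G H J where c: "is_herm c" "is_hpmap F" "is_hpmap G" "hpmap_nonzero G"
      "\<And>z w. heval c z w * normsq G z w = normsq F z w"
    and d: "is_herm d" "is_hpmap H" "is_hpmap J" "hpmap_nonzero J"
      "\<And>z w. heval d z w * normsq J z w = normsq H z w"
    using assms unfolding inQ_def by blast
  have "heval (hsum c d) z w * normsq (hpmap_tensor G J) z w
      = normsq (hpmap_tensor F J @ hpmap_tensor H G) z w" for z w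
  proof -
    have "heval (hsum c d) z w * normsq (hpmap_tensor G J) z w
        = (heval c z w * normsq G z w) * normsq J z w + (heval d z w * normsq J z w) * normsq G z w"
      by (simp add: heval_hsum is_herm_finite c(1,3) d(1,3) normsq_tensor algebra_simps)
    then show ?thesis
      by (simp add: c(2,3,5) d(2,3,5) normsq_append normsq_tensor)
  qed
  then show ?thesis
    unfolding inQ_def
    using is_herm_hsum[OF c(1) d(1)] is_hpmap_append[OF is_hpmap_tensor[OF c(2) d(3)] is_hpmap_tensor[OF d(2) c(3)]]
      is_hpmap_tensor[OF c(3) d(3)] hpmap_nonzero_tensor[OF c(3) d(3) c(4) d(4)] by blast
qed

lemma inQ_hprod:
  assumes "inQ c" "inQ d"
  shows "inQ (hprod c d)"
proof -
  obtain F G H J where c: "is_herm c" "is_hpmap F" "is_hpmap G" "hpmap_nonzero G"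
      "\<And>z w. heval c z w * normsq G z w = normsq F z w"
    and d: "is_herm d" "is_hpmap H" "is_hpmap J" "hpmap_nonzero J"
      "\<And>z w. heval d z w * normsq J z w = normsq H z w"
    using assms unfolding inQ_def by blast
  have "heval (hprod c d) z w * normsq (hpmap_tensor G J) z w = normsq (hpmap_tensor F H) z w" for z w
  proof -
    have "heval (hprod c d) z w * normsq (hpmap_tensor G J) z w
        = (heval c z w * normsq G z w) * (heval d z w * normsq J z w)"
      by (simp add: heval_hprod is_herm_finite c(1,3) d(1,3) normsq_tensor)
    then show ?thesis by (simp add: c(2,5) d(2,5) normsq_tensor)
  qed
  then show ?thesis
    unfolding inQ_def
    using is_herm_hprod[OF c(1) d(1)] is_hpmap_tensor[OF c(2) d(2)] is_hpmap_tensor[OF c(3) d(3)]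
      hpmap_nonzero_tensor[OF c(3) d(3) c(4) d(4)] by blast
qed

lemma heval_hprod_diag_nonneg:
  assumes "is_herm c" "is_herm d" "0 \<le> Re (heval c z z)" "0 \<le> Re (heval d z z)"
  shows "0 \<le> Re (heval (hprod c d) z z)"
proof -
  have "heval (hprod c d) z z = of_real (Re (heval c z z) * Re (heval d z z))"
    using heval_hprod[OF is_herm_finite[OF assms(1)] is_herm_finite[OF assms(2)]]
      heval_diag_real[OF assms(1)] heval_diag_real[OF assms(2)] by simp
  with assms(3,4) show ?thesis by simp
qed

lemma inQ'_hprod:
  assumes "inQ' c" "inQ' d"
  shows "inQ' (hprod c d)"
proof -
  obtain s F s' F' where c: "is_herm c" "\<And>z. 0 \<le> Re (heval c z z)" "is_herm s"
      "\<And>z. 0 \<le> Re (heval s z z)" "\<exists>\<alpha> \<beta>. s \<alpha> \<beta> \<noteq> 0" "is_hpmap F"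
      "\<And>z w. heval c z w * heval s z w = normsq F z w"
    and d: "is_herm d" "\<And>z. 0 \<le> Re (heval d z z)" "is_herm s'"
      "\<And>z. 0 \<le> Re (heval s' z z)" "\<exists>\<alpha> \<beta>. s' \<alpha> \<beta> \<noteq> 0" "is_hpmap F'"
      "\<And>z w. heval d z w * heval s' z w = normsq F' z w"
    using assms unfolding inQ'_def by blast
  obtain z w where "heval s z w \<noteq> 0" "heval s' z w \<noteq> 0"
    using heval_ex_common_nonzero is_herm_finite c(3,5) d(3,5) by metis
  then have "heval (hprod s s') z w \<noteq> 0" by (simp add: heval_hprod is_herm_finite c(3) d(3))
  then have nonzero: "\<exists>\<alpha> \<beta>. hprod s s' \<alpha> \<beta> \<noteq> 0" by (rule heval_nonzero_imp_coeff_nonzero)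
  have "heval (hprod c d) z w * heval (hprod s s') z w = normsq (hpmap_tensor F F') z w" for z w
  proof -
    have "heval (hprod c d) z w * heval (hprod s s') z w
        = (heval c z w * heval s z w) * (heval d z w * heval s' z w)"
      by (simp add: heval_hprod is_herm_finite c(1,3) d(1,3))
    then show ?thesis by (simp add: c(6,7) d(6,7) normsq_tensor)
  qed
  moreover have "0 \<le> Re (heval (hprod c d) z z)" "0 \<le> Re (heval (hprod s s') z z)" for z
    using c d by (simp_all add: heval_hprod_diag_nonneg)
  ultimately show ?thesis
    unfolding inQ'_def
    using is_herm_hprod[OF c(1) d(1)] is_herm_hprod[OF c(3) d(3)] nonzero is_hpmap_tensor[OF c(6) d(6)]
    by blast
qed

section \<open>Radial polynomials\<close>

definition mindex_at :: "'n \<Rightarrow> nat \<Rightarrow> 'n mindex" where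
  "mindex_at a k = (\<lambda>i. if i = a then k else 0)"

lemma mindex_at_eq_iff [simp]: "mindex_at a k = mindex_at a j \<longleftrightarrow> k = j"
  unfolding mindex_at_def by (metis)

lemma zmonom_mindex_at [simp]: "zmonom z (mindex_at a k) = z a ^ k"
  unfolding zmonom_def mindex_at_def by (simp add: power_0 if_distrib prod.If_cases)

definition radial_herm :: "'n \<Rightarrow> (nat \<Rightarrow> real) \<Rightarrow> nat \<Rightarrow> ('n::finite) hcoeffs" where
  "radial_herm a q N = (\<lambda>\<alpha> \<beta>. \<Sum>k<N. if \<alpha> = mindex_at a k \<and> \<beta> = mindex_at a k then of_real (q k) else 0)"

lemma hsupp_radial_herm: "hsupp (radial_herm a q N) \<subseteq> (\<lambda>k. (mindex_at a k, mindex_at a k)) ` {..<N}"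
proof
  fix p assume "p \<in> hsupp (radial_herm a q N)"
  then have "(\<Sum>k<N. if fst p = mindex_at a k \<and> snd p = mindex_at a k then complex_of_real (q k) else 0) \<noteq> 0"
    by (simp add: hsupp_def radial_herm_def split_def)
  then obtain k where "k < N" "(if fst p = mindex_at a k \<and> snd p = mindex_at a k then complex_of_real (q k) else 0) \<noteq> 0"
    by (rule sum.not_neutral_contains_not_neutral) simp
  then show "p \<in> (\<lambda>k. (mindex_at a k, mindex_at a k)) ` {..<N}"
    by (auto simp: prod_eq_iff split: if_splits)
qed

lemma radial_herm_diag: "k < N \<Longrightarrow> radial_herm a q N (mindex_at a k) (mindex_at a k) = of_real (q k)"
  unfolding radial_herm_def by (simp add: eq_commute[of k])

lemma is_herm_radial_herm: "is_herm (radial_herm a q N)"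
  unfolding is_herm_def
  using finite_subset[OF hsupp_radial_herm]
  by (auto simp: radial_herm_def cnj_sum intro!: sum.cong)

lemma heval_radial_herm:
  "heval (radial_herm a q N) z w = (\<Sum>k<N. of_real (q k) * (z a * cnj (w a)) ^ k)"
proof -
  have inj: "inj_on (\<lambda>k. (mindex_at a k, mindex_at a k)) {..<N}" by (rule inj_onI) simp
  show ?thesis
    unfolding heval_eq_sum_superset[OF _ hsupp_radial_herm, simplified] sum.reindex[OF inj]
    by (simp add: radial_herm_diag power_mult_distrib)
qed

lemma continuous_on_radial_herm:
  assumes "\<And>k. continuous_on S (\<lambda>t. q t k)"
  shows "continuous_on S (\<lambda>t. radial_herm a (q t) N \<alpha> \<beta>)"
  unfolding radial_herm_def
proof (intro continuous_on_sum)
  fix k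
  show "continuous_on S (\<lambda>t. if \<alpha> = mindex_at a k \<and> \<beta> = mindex_at a k then complex_of_real (q t k) else 0)"
  proof (cases "\<alpha> = mindex_at a k \<and> \<beta> = mindex_at a k")
    case True
    then show ?thesis by (simp add: continuous_on_of_real assms)
  next
    case False
    then show ?thesis by (simp only: if_False) (rule continuous_on_const)
  qed
qed

definition radial_hpmap :: "'n \<Rightarrow> (nat \<Rightarrow> real) \<Rightarrow> nat \<Rightarrow> ('n::finite) pcoeffs list" where
  "radial_hpmap a q N = map (\<lambda>k \<alpha>. if \<alpha> = mindex_at a k then of_real (sqrt (q k)) else 0) [0..<N]"

lemma peval_radial_monomial:
  "peval (\<lambda>\<alpha>. if \<alpha> = mindex_at a k then c else 0) z = c * z a ^ k"
proof -
  have "{\<alpha>. (if \<alpha> = mindex_at a k then c else 0) \<noteq> 0} \<subseteq> {mindex_at a k}" by auto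
  from peval_eq_sum_superset[OF _ this] show ?thesis by simp
qed

lemma is_hpmap_radial_hpmap: "is_hpmap (radial_hpmap a q N)"
proof -
  have "{\<alpha>. (if \<alpha> = mindex_at a k then c else 0) \<noteq> 0} \<subseteq> {mindex_at a k}" for k c by auto
  then show ?thesis
    unfolding is_hpmap_def is_hpoly_def radial_hpmap_def by (auto intro: finite_subset)
qed

lemma hpmap_nonzero_radial_hpmap: "0 < N \<Longrightarrow> 0 < q 0 \<Longrightarrow> hpmap_nonzero (radial_hpmap a q N)"
  unfolding hpmap_nonzero_def radial_hpmap_def by force

lemma normsq_radial_hpmap:
  assumes "\<forall>k<N. 0 \<le> q k"
  shows "normsq (radial_hpmap a q N) z w = heval (radial_herm a q N) z w"
proof -
  define f where "f k = (\<lambda>\<alpha>. if \<alpha> = mindex_at a k then complex_of_real (sqrt (q k)) else 0)" for k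
  have "peval (f k) z * cnj (peval (f k) w) = of_real (q k) * (z a * cnj (w a)) ^ k" if "k < N" for k
  proof -
    have "complex_of_real (sqrt (q k)) * complex_of_real (sqrt (q k)) = complex_of_real (q k)"
      using assms that by (simp flip: of_real_mult)
    moreover have "peval (f k) z * cnj (peval (f k) w)
        = (complex_of_real (sqrt (q k)) * complex_of_real (sqrt (q k))) * (z a * cnj (w a)) ^ k"
      by (simp add: f_def peval_radial_monomial power_mult_distrib mult_ac)
    ultimately show ?thesis by simp
  qed
  then have "(\<Sum>k\<in>set [0..<N]. peval (f k) z * cnj (peval (f k) w))
      = (\<Sum>k<N. of_real (q k) * (z a * cnj (w a)) ^ k)"
    by (intro sum.cong) auto
  then show ?thesis
    unfolding normsq_def radial_hpmap_def heval_radial_herm map_map o_def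
      interv_sum_list_conv_sum_set_nat f_def .
qed

lemma inQ_if_radial_multiplier:
  assumes "is_herm r" "0 < N" "0 < q 0" "\<forall>k<N. 0 \<le> q k" "\<forall>k<M. 0 \<le> p k"
    and "\<And>z w. heval r z w * heval (radial_herm a q N) z w = heval (radial_herm a p M) z w"
  shows "inQ r"
proof -
  have "heval r z w * normsq (radial_hpmap a q N) z w = normsq (radial_hpmap a p M) z w" for z w
    using assms(6) by (simp add: normsq_radial_hpmap assms(4,5))
  then show ?thesis
    unfolding inQ_def
    using assms(1-3) is_hpmap_radial_hpmap hpmap_nonzero_radial_hpmap by blast
qed

lemma inQ'_if_radial_multiplier:
  assumes "is_herm r" "\<forall>z. 0 \<le> Re (heval r z z)" "0 < N" "0 < q 0" "\<forall>k<N. 0 \<le> q k" "\<forall>k<M. 0 \<le> p k"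
    and "\<And>z w. heval r z w * heval (radial_herm a q N) z w = heval (radial_herm a p M) z w"
  shows "inQ' r"
proof -
  have "0 \<le> Re (heval (radial_herm a q N) z z)" for z
    unfolding normsq_radial_hpmap[OF assms(5), symmetric] by (rule normsq_diag_Re_nonneg)
  moreover have "radial_herm a q N (mindex_at a 0) (mindex_at a 0) \<noteq> 0"
    using assms(3,4) by (simp add: radial_herm_diag)
  moreover have "heval r z w * heval (radial_herm a q N) z w = normsq (radial_hpmap a p M) z w" for z w
    using assms(7) by (simp add: normsq_radial_hpmap assms(6))
  ultimately show ?thesis
    unfolding inQ'_def
    using assms(1,2) is_herm_radial_herm is_hpmap_radial_hpmap by blast
qed

section \<open>Failure of closedness under limits\<close>

lemma chebyshev_telescope:
  fixes U :: "nat \<Rightarrow> 'a::comm_ring_1"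
  assumes "U 0 = 1" "U 1 = 2 * c" "\<And>k. U (k + 2) = 2 * c * U (k + 1) - U k"
  shows "(1 - 2 * c * u + u\<^sup>2) * (\<Sum>k<Suc N. U k * u ^ k)
       = 1 - U (Suc N) * u ^ Suc N + U N * u ^ Suc (Suc N)"
proof (induction N)
  case 0
  then show ?case using assms(1,2) by (simp add: power2_eq_square algebra_simps)
next
  case (Suc N)
  have rec: "U (Suc (Suc N)) = 2 * c * U (Suc N) - U N" using assms(3)[of N] by simp
  have "(1 - 2 * c * u + u\<^sup>2) * (\<Sum>k<Suc (Suc N). U k * u ^ k)
      = 1 - U (Suc N) * u ^ Suc N + U N * u ^ Suc (Suc N) + (1 - 2 * c * u + u\<^sup>2) * (U (Suc N) * u ^ Suc N)"
    by (simp only: sum.lessThan_Suc[of _ "Suc N"] distrib_left Suc.IH)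
  also have "\<dots> = 1 - U (Suc (Suc N)) * u ^ Suc (Suc N) + U (Suc N) * u ^ Suc (Suc (Suc N))"
  proof -
    have "1 - A * p + B * (u * p) + (1 - 2 * c * u + u\<^sup>2) * (A * p)
        = 1 - (2 * c * A - B) * (u * p) + A * (u * (u * p))" for A B p :: 'a
      by (simp add: algebra_simps power2_eq_square)
    then show ?thesis unfolding rec power_Suc[of u "Suc N"] power_Suc[of u "Suc (Suc N)"] .
  qed
  finally show ?case .
qed

text \<open>\<open>U\<^sub>k(cos \<phi>)\<close> for the Chebyshev polynomials \<open>U\<^sub>k\<close> of the second kind.\<close>

definition chebU :: "real \<Rightarrow> nat \<Rightarrow> real" where
  "chebU \<phi> k = sin (real (Suc k) * \<phi>) / sin \<phi>"

lemma chebU_0: "sin \<phi> \<noteq> 0 \<Longrightarrow> chebU \<phi> 0 = 1"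
  by (simp add: chebU_def)

lemma chebU_1: "sin \<phi> \<noteq> 0 \<Longrightarrow> chebU \<phi> 1 = 2 * cos \<phi>"
  by (simp add: chebU_def sin_double numeral_2_eq_2 [symmetric])

lemma chebU_rec: "chebU \<phi> (k + 2) = 2 * cos \<phi> * chebU \<phi> (k + 1) - chebU \<phi> k"
proof -
  have "sin (real (Suc (k + 2)) * \<phi>) = sin (real (Suc (k + 1)) * \<phi> + \<phi>)"
    "sin (real (Suc k) * \<phi>) = sin (real (Suc (k + 1)) * \<phi> - \<phi>)"
    by (simp_all add: algebra_simps)
  then have "sin (real (Suc (k + 2)) * \<phi>) = 2 * cos \<phi> * sin (real (Suc (k + 1)) * \<phi>) - sin (real (Suc k) * \<phi>)"
    by (simp add: sin_add sin_diff)
  then show ?thesis by (simp add: chebU_def diff_divide_distrib)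
qed

lemma chebU_pos: "0 < \<phi> \<Longrightarrow> real (Suc k) * \<phi> < pi \<Longrightarrow> 0 < chebU \<phi> k"
  unfolding chebU_def
  by (intro divide_pos_pos sin_gt_zero) (auto intro: order.strict_trans1[of _ "real (Suc k) * \<phi>"])

lemma chebU_nonpos:
  "0 < \<phi> \<Longrightarrow> \<phi> < pi \<Longrightarrow> pi \<le> real (Suc k) * \<phi> \<Longrightarrow> real (Suc k) * \<phi> < 2 * pi \<Longrightarrow> chebU \<phi> k \<le> 0"
  unfolding chebU_def by (intro divide_nonpos_pos sin_le_zero sin_gt_zero) auto

definition quartic_herm :: "'n \<Rightarrow> real \<Rightarrow> ('n::finite) hcoeffs" where
  "quartic_herm a c = radial_herm a (\<lambda>k. if k = 1 then - 2 * c else 1) 3"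

lemma heval_quartic_herm:
  "heval (quartic_herm a c) z w = 1 - 2 * of_real c * (z a * cnj (w a)) + (z a * cnj (w a))\<^sup>2"
  by (simp add: quartic_herm_def heval_radial_herm numeral_3_eq_3 power2_eq_square)

lemma heval_quartic_herm_diag:
  "heval (quartic_herm a c) z z = of_real (1 - 2 * c * (cmod (z a))\<^sup>2 + ((cmod (z a))\<^sup>2)\<^sup>2)"
  unfolding heval_quartic_herm complex_norm_square [symmetric] by simp

lemma quartic_herm_diag_nonneg:
  assumes "\<bar>c\<bar> \<le> 1"
  shows "0 \<le> Re (heval (quartic_herm a c) z z)"
proof -
  have "0 \<le> ((cmod (z a))\<^sup>2 - c)\<^sup>2 + (1 - c\<^sup>2)"
    using assms abs_square_le_1[of c] by (simp add: add_nonneg_nonneg)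
  then show ?thesis
    unfolding heval_quartic_herm_diag by (simp add: power2_eq_square algebra_simps)
qed

lemma heval_quartic_herm_times_chebU:
  assumes "sin \<phi> \<noteq> 0" "0 < n"
  defines "p \<equiv> \<lambda>k. if k = 0 then 1 else if k = n then - chebU \<phi> n
                    else if k = Suc n then chebU \<phi> (n - 1) else 0"
  shows "heval (quartic_herm a (cos \<phi>)) z w * heval (radial_herm a (chebU \<phi>) n) z w
       = heval (radial_herm a p (n + 2)) z w"
proof -
  obtain N where n: "n = Suc N" using assms(2) by (cases n) auto
  let ?u = "z a * cnj (w a)"
  have "(1 - 2 * of_real (cos \<phi>) * ?u + ?u\<^sup>2) * (\<Sum>k<Suc N. of_real (chebU \<phi> k) * ?u ^ k)
      = 1 - of_real (chebU \<phi> (Suc N)) * ?u ^ Suc N + of_real (chebU \<phi> N) * ?u ^ Suc (Suc N)"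
  proof (rule chebyshev_telescope)
    show "of_real (chebU \<phi> 0) = (1::complex)" by (simp add: chebU_0 assms(1))
    show "of_real (chebU \<phi> 1) = 2 * (of_real (cos \<phi>) :: complex)"
      using chebU_1[OF assms(1)] by simp
    show "of_real (chebU \<phi> (k + 2)) = 2 * of_real (cos \<phi>) * of_real (chebU \<phi> (k + 1))
        - (of_real (chebU \<phi> k) :: complex)" for k
      using chebU_rec[of \<phi> k] by simp
  qed
  moreover have "(\<Sum>k<n. of_real (p k) * ?u ^ k) = 1"
  proof -
    have "(\<Sum>k<n. of_real (p k) * ?u ^ k) = (\<Sum>k<n. if k = 0 then 1 else 0)"
      by (intro sum.cong) (auto simp: p_def)
    then show ?thesis using assms(2) by simp
  qed
  ultimately show ?thesis
    unfolding heval_quartic_herm heval_radial_herm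
    by (simp add: n p_def)
qed

lemma quartic_herm_in_Q_Q':
  assumes "0 < \<phi>" "\<phi> < pi"
  shows "inQ (quartic_herm a (cos \<phi>)) \<and> inQ' (quartic_herm a (cos \<phi>))"
proof -
  have sin: "sin \<phi> \<noteq> 0" using assms sin_gt_zero by fastforce
  txt \<open>For the least \<open>n\<close> with \<open>\<pi> \<le> (n + 1) \<phi>\<close> we get \<open>U\<^sub>k(cos \<phi>) > 0\<close> for \<open>k < n\<close>
    and \<open>U\<^sub>n(cos \<phi>) \<le> 0\<close>.\<close>
  obtain n where n: "\<not> pi \<le> real n * \<phi>" "pi \<le> real (Suc n) * \<phi>"
  proof -
    obtain m where "pi < real m * \<phi>" using ex_less_of_nat_mult[OF assms(1)] by blast
    moreover have "\<not> pi \<le> real 0 * \<phi>" using pi_gt_zero by linarith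
    ultimately show thesis
      using exists_least_lemma[of "\<lambda>n. pi \<le> real n * \<phi>"] that less_imp_le by blast
  qed
  have "0 < n"
    using n(2) assms(2) by (cases n) auto
  have nonneg: "0 \<le> chebU \<phi> k" if "k < n" for k
  proof -
    have "real (Suc k) * \<phi> \<le> real n * \<phi>" using that assms(1) by (intro mult_right_mono) auto
    with n(1) have "real (Suc k) * \<phi> < pi" by linarith
    with assms(1) show ?thesis by (intro less_imp_le chebU_pos)
  qed
  have "chebU \<phi> n \<le> 0"
    using n assms by (intro chebU_nonpos) (auto simp: distrib_right)
  define p where "p k = (if k = 0 then 1 else if k = n then - chebU \<phi> n
                    else if k = Suc n then chebU \<phi> (n - 1) else 0)" for k
  have "\<forall>k<n + 2. 0 \<le> p k"
    using \<open>chebU \<phi> n \<le> 0\<close> nonneg[of "n - 1"] \<open>0 < n\<close> by (auto simp: p_def)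
  moreover have "0 < chebU \<phi> 0" using \<open>0 < n\<close> nonneg[of 0] sin by (simp add: chebU_0)
  moreover have "\<forall>k<n. 0 \<le> chebU \<phi> k" using nonneg by blast
  moreover have "is_herm (quartic_herm a (cos \<phi>))" by (simp add: quartic_herm_def is_herm_radial_herm)
  moreover have "\<forall>z. 0 \<le> Re (heval (quartic_herm a (cos \<phi>)) z z)"
    by (simp add: quartic_herm_diag_nonneg)
  moreover note heval_quartic_herm_times_chebU[OF sin \<open>0 < n\<close>, of a, folded p_def]
  ultimately show ?thesis
    using inQ_if_radial_multiplier[OF _ \<open>0 < n\<close>] inQ'_if_radial_multiplier[OF _ _ \<open>0 < n\<close>] by blast
qed

lemma heval_quartic_herm_one_diag: "heval (quartic_herm a 1) z z = of_real ((1 - (cmod (z a))\<^sup>2)\<^sup>2)"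
  unfolding heval_quartic_herm_diag by (simp add: power2_eq_square algebra_simps)

lemma quartic_herm_one_multiplier_vanishes:
  assumes "is_hpmap F" "\<And>z. heval (quartic_herm a 1) z z * X z = normsq F z z"
  shows "normsq F z w = 0"
proof -
  have "\<forall>f\<in>set F. \<forall>\<alpha>. f \<alpha> = 0"
  proof (rule hpmap_coeffs_zero_if_normsq_vanishes_on_polyradii[OF assms(1), of 1 "{1}"])
    show "normsq F z z = 0" if "\<forall>i. cmod (z i) \<in> {1}" for z
      using that assms(2)[of z] by (simp add: heval_quartic_herm_one_diag)
  qed simp_all
  then show ?thesis by (rule normsq_eq_0_if_coeffs_0)
qed

lemma quartic_herm_one_not_inQ: "\<not> inQ (quartic_herm a 1)"
proof
  assume "inQ (quartic_herm a 1)"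
  then obtain F G where F: "is_hpmap F" and G: "is_hpmap G" "hpmap_nonzero G"
    and eq: "\<And>z w. heval (quartic_herm a 1) z w * normsq G z w = normsq F z w"
    unfolding inQ_def by blast
  have "\<forall>g\<in>set G. \<forall>\<alpha>. g \<alpha> = 0"
  proof (rule hpmap_coeffs_zero_if_normsq_vanishes_on_polyradii[OF G(1), of 2 "{x. x \<noteq> 1}"])
    show "normsq G z z = 0" if "\<forall>i. cmod (z i) \<in> {x. x \<noteq> 1}" for z
    proof -
      have "(cmod (z a))\<^sup>2 \<noteq> 1"
        using that norm_ge_zero[of "z a"] unfolding power2_eq_1_iff by fastforce
      then have "heval (quartic_herm a 1) z z \<noteq> 0"
        unfolding heval_quartic_herm_one_diag of_real_eq_0_iff by simp
      with eq[of z z] quartic_herm_one_multiplier_vanishes[OF F eq] show ?thesis by simp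
    qed
    show "(2::real) ^ k \<in> {x. x \<noteq> 1}" if "0 < k" for k
    proof -
      have "(1::real) < 2 ^ k" by (rule one_less_power) (use that in simp_all)
      then show ?thesis by simp
    qed
  qed simp
  with G(2) show False by (auto simp: hpmap_nonzero_def)
qed

lemma quartic_herm_one_not_inQ': "\<not> inQ' (quartic_herm a 1)"
proof
  assume "inQ' (quartic_herm a 1)"
  then obtain s F where s: "is_herm s" "\<exists>\<alpha> \<beta>. s \<alpha> \<beta> \<noteq> 0" and F: "is_hpmap F"
    and eq: "\<And>z w. heval (quartic_herm a 1) z w * heval s z w = normsq F z w"
    unfolding inQ'_def by blast
  have "quartic_herm a 1 (mindex_at a 0) (mindex_at a 0) \<noteq> 0"
    by (simp add: quartic_herm_def radial_herm_diag)
  moreover obtain \<alpha> \<beta> where "s \<alpha> \<beta> \<noteq> 0" using s(2) by blast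
  moreover have "finite (hsupp (quartic_herm a 1))"
    unfolding quartic_herm_def by (rule is_herm_finite[OF is_herm_radial_herm])
  ultimately obtain z w where "heval (quartic_herm a 1) z w \<noteq> 0" "heval s z w \<noteq> 0"
    using heval_ex_common_nonzero is_herm_finite[OF s(1)] by blast
  with eq[of z w] quartic_herm_one_multiplier_vanishes[OF F eq] show False by simp
qed

lemma not_closed_under_limits_if_one_parameter_family:
  fixes r :: "real \<Rightarrow> ('n::finite) hcoeffs"
  assumes "finite D" "\<And>t. is_herm (r t)" "\<And>t. hsupp (r t) \<subseteq> D"
    and "\<And>\<alpha> \<beta>. continuous_on UNIV (\<lambda>t. r t \<alpha> \<beta>)"
    and "eventually (\<lambda>t. S (r t)) (at 0)" "\<not> S (r 0)"
  shows "not_closed_under_limits S"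
proof -
  define K :: "(nat \<Rightarrow> real) set" where "K = {x. \<forall>i\<ge>1. x i = 0}"
  define L :: "nat \<Rightarrow> real" where "L = (\<lambda>_. 0)"
  define emb :: "real \<Rightarrow> nat \<Rightarrow> real" where "emb t = (\<lambda>i. if i = 0 then t else 0)" for t
  have coord0: "continuous_on UNIV (\<lambda>x :: nat \<Rightarrow> real. x 0)" by simp
  have "closed {x :: nat \<Rightarrow> real. 1 \<le> i \<longrightarrow> x i = 0}" for i
    using closed_Collect_eq[of "\<lambda>x :: nat \<Rightarrow> real. x i" "\<lambda>_. 0"] by (cases "1 \<le> i") simp_all
  then have "closed K" unfolding K_def by (rule closed_Collect_all)
  moreover have "continuous_on K (\<lambda>x. r (x 0) \<alpha> \<beta>)" for \<alpha> \<beta>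
    using continuous_on_compose2[OF assms(4) coord0] continuous_on_subset by blast
  moreover have "L islimpt K"
    unfolding islimpt_sequential
  proof (intro exI conjI allI)
    show "emb (inverse (real (Suc n))) \<in> K - {L}" for n
      by (auto simp: emb_def K_def L_def fun_eq_iff)
    have "continuous_on UNIV emb"
    proof (rule continuous_on_coordinatewise_then_product)
      show "continuous_on UNIV (\<lambda>t. emb t i)" for i
        by (cases "i = 0") (simp_all add: emb_def continuous_on_const continuous_on_id)
    qed
    then have "(\<lambda>n. emb (inverse (real (Suc n)))) \<longlonglongrightarrow> emb 0"
      by (rule continuous_on_tendsto_compose[OF _ LIMSEQ_inverse_real_of_nat]) simp_all
    then show "(\<lambda>n. emb (inverse (real (Suc n)))) \<longlonglongrightarrow> L"
      by (simp add: emb_def L_def fun_eq_iff)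
  qed
  moreover have "eventually (\<lambda>x. S (r (x 0))) (at L within K)"
  proof -
    obtain V where V: "open V" "0 \<in> V" "\<And>t. t \<in> V \<Longrightarrow> t \<noteq> 0 \<Longrightarrow> S (r t)"
      using assms(5) unfolding eventually_at_topological by blast
    have "open ((\<lambda>x :: nat \<Rightarrow> real. x 0) -` V)"
      using continuous_imp_open_vimage[OF coord0 open_UNIV V(1)] by simp
    moreover have "x 0 \<noteq> 0" if "x \<in> K" "x \<noteq> L" for x
    proof
      assume "x 0 = 0"
      then have "x i = 0" for i using that(1) by (cases i) (auto simp: K_def)
      with that(2) show False by (simp add: L_def fun_eq_iff)
    qed
    ultimately show ?thesis
      unfolding eventually_at_topological using V(2,3) by (intro exI[of _ "(\<lambda>x. x 0) -` V"]) (auto simp: L_def)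
  qed
  moreover have "\<not> S (r (L 0))" using assms(6) by (simp add: L_def)
  moreover have "L \<in> K" "K \<subseteq> {x. \<forall>i\<ge>1. x i = 0}" by (simp_all add: K_def L_def)
  ultimately show ?thesis
    unfolding not_closed_under_limits_def
    using assms(1-3) by (intro exI[of _ 1] exI[of _ K] exI[of _ "\<lambda>x. r (x 0)"] exI[of _ L] exI[of _ D]) auto
qed

lemma not_closed_under_limits_along_quartic_family:
  assumes "\<And>\<phi>. 0 < \<phi> \<Longrightarrow> \<phi> < pi \<Longrightarrow> S (quartic_herm a (cos \<phi>))" "\<not> S (quartic_herm a 1)"
  shows "not_closed_under_limits S"
proof (rule not_closed_under_limits_if_one_parameter_family)
  show "finite ((\<lambda>k. (mindex_at a k, mindex_at a k)) ` {..<3})" by simp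
  show "is_herm (quartic_herm a (cos t))" for t
    by (simp add: quartic_herm_def is_herm_radial_herm)
  show "hsupp (quartic_herm a (cos t)) \<subseteq> (\<lambda>k. (mindex_at a k, mindex_at a k)) ` {..<3}" for t
    unfolding quartic_herm_def by (rule hsupp_radial_herm)
  show "continuous_on UNIV (\<lambda>t. quartic_herm a (cos t) \<alpha> \<beta>)" for \<alpha> \<beta>
    unfolding quartic_herm_def
  proof (rule continuous_on_radial_herm)
    show "continuous_on UNIV (\<lambda>t. if k = 1 then - 2 * cos t else 1 :: real)" for k
      by (cases "k = 1") (simp_all add: continuous_on_const, intro continuous_intros)
  qed
  have "S (quartic_herm a (cos t))" if "t \<noteq> 0" "dist t 0 < pi" for t
    using assms(1)[of "\<bar>t\<bar>"] that by simp
  then show "eventually (\<lambda>t. S (quartic_herm a (cos t))) (at 0)"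
    unfolding eventually_at using pi_gt_zero by blast
  show "\<not> S (quartic_herm a (cos 0))" using assms(2) by simp
qed

theorem lemma2p4:
  shows "closed_under_sums (inQ :: ('n::finite) hcoeffs \<Rightarrow> bool) \<and>
         closed_under_products (inQ :: 'n hcoeffs \<Rightarrow> bool) \<and>
         not_closed_under_limits (inQ :: 'n hcoeffs \<Rightarrow> bool) \<and>
         closed_under_products (inQ' :: 'n hcoeffs \<Rightarrow> bool) \<and>
         not_closed_under_limits (inQ' :: 'n hcoeffs \<Rightarrow> bool)"
  using inQ_hsum inQ_hprod inQ'_hprod
    not_closed_under_limits_along_quartic_family[of inQ, OF _ quartic_herm_one_not_inQ]
    not_closed_under_limits_along_quartic_family[of inQ', OF _ quartic_herm_one_not_inQ']
    quartic_herm_in_Q_Q'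
  unfolding closed_under_sums_def closed_under_products_def by blast

end
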